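(* There is an isometric embedding of the partition space $(\mathcal{P}_{\ell,m},\delta_2)$ into the graph edit kernel space $(\mathcal{G}_{\ell,m},\delta_g)$, i.e. an injective map $f:\mathcal{P}_{\ell,m}\to\mathcal{G}_{\ell,m}$ with $\delta_g(f(X),f(Y))=\delta_2(X,Y)$ for all $X,Y\in\mathcal{P}_{\ell,m}$.
   Context: Fix $1\le\ell\le m$. $\mathcal{X} = \{\mathbf{X}\in[0,1]^{\ell\times m} : \mathbf{X}^T\mathbf{1}_\ell = \mathbf{1}_m\}$; $\Pi$ is the group of $\ell\times\ell$ permutation matrices; $\mathcal{P}_{\ell,m}$ is the set of orbits $\{\mathbf{P}\mathbf{X}:\mathbf{P}\in\Pi\}$ with metric $\delta_2(X,Y)=\min\{\|\mathbf{X}-\mathbf{Y}\|_2:\mathbf{X}\in X,\mathbf{Y}\in Y\}$ (Frobenius norm). An attributed graph of order $\ell$ with attributes in $\mathbb{R}^m$ is a triple $(\mathcal{V},\mathcal{E},\alpha)$ with $|\mathcal{V}|=\ell$, $\mathcal{E}\subseteq\mathcal{V}\times\mathcal{V}$, and $\alpha:\mathcal{V}\times\mathcal{V}\to\mathbb{R}^m$ such that for $i\ne j$, $\alpha(i,j)\ne\mathbf{0}$ iff $(i,j)\in\mathcal{E}$ (node attributes $\alpha(i,i)$ are arbitrary); $\mathcal{G}_{\ell,m}$ is the set of such graphs. With $\mathcal{V}=\{1,\dots,\ell\}$, a graph $G$ is represented by the $\ell\times\ell$ matrix $\mathbf{G}=(\mathbf{g}_{ij})$ with entries $\mathbf{g}_{ij}=\alpha(i,j)\in\mathbb{R}^m$,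 and graphs differing by relabeling of nodes are identified. The graph edit kernel metric is $\delta_g(G,H)=\min_{\mathbf{P}\in\Pi}\|\mathbf{G}-\mathbf{P}\mathbf{H}\mathbf{P}^T\|_2$, where for such block matrices $\|\mathbf{A}\|_2=\big(\sum_{i,j}\|\mathbf{a}_{ij}\|^2\big)^{1/2}$ and $\mathbf{P}\mathbf{H}\mathbf{P}^T$ permutes rows and columns of $\mathbf{H}$ simultaneously. *)

theory Defs
  imports "HOL-Analysis.Analysis"
begin

text \<open>Node set and column index set are finite types 'l (size ell) and 'm (size m).
  An ell x m matrix is a function 'l => 'm => real.\<close>

definition partition_matrix :: "('l::finite \<Rightarrow> 'm::finite \<Rightarrow> real) \<Rightarrow> bool" where
  "partition_matrix X \<longleftrightarrow> (\<forall>i j. 0 \<le> X i j \<and> X i j \<le> 1) \<and> (\<forall>j. (\<Sum>i\<in>UNIV. X i j) = 1)"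

definition row_perm :: "('l \<Rightarrow> 'l) \<Rightarrow> ('l \<Rightarrow> 'm \<Rightarrow> real) \<Rightarrow> ('l \<Rightarrow> 'm \<Rightarrow> real)" where
  "row_perm p X = (\<lambda>i j. X (p i) j)"

definition row_orbit :: "('l::finite \<Rightarrow> 'm::finite \<Rightarrow> real) \<Rightarrow> ('l \<Rightarrow> 'm \<Rightarrow> real) set" where
  "row_orbit X = {row_perm p X | p. p permutes (UNIV :: 'l set)}"

definition partition_space :: "('l::finite \<Rightarrow> 'm::finite \<Rightarrow> real) set set" where
  "partition_space = {row_orbit X | X. partition_matrix X}"

definition frob :: "('l::finite \<Rightarrow> 'm::finite \<Rightarrow> real) \<Rightarrow> real" where
  "frob X = sqrt (\<Sum>i\<in>UNIV. \<Sum>j\<in>UNIV. (X i j)\<^sup>2)"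

definition delta2 :: "('l::finite \<Rightarrow> 'm::finite \<Rightarrow> real) set \<Rightarrow> ('l \<Rightarrow> 'm \<Rightarrow> real) set \<Rightarrow> real" where
  "delta2 A B = Min {frob (\<lambda>i j. X i j - Y i j) | X Y. X \<in> A \<and> Y \<in> B}"

text \<open>Attributed graphs of order ell with attributes in R^m, represented by their
  ell x ell matrix of attributes g_ij = alpha(i,j) (the edge set is determined by the
  nonzero off-diagonal entries); graphs are identified up to relabelling of nodes,
  i.e. simultaneous row/column permutation P G P^T.\<close>
definition sim_perm :: "('l \<Rightarrow> 'l) \<Rightarrow> ('l \<Rightarrow> 'l \<Rightarrow> real^'m) \<Rightarrow> ('l \<Rightarrow> 'l \<Rightarrow> real^'m)" where
  "sim_perm p H = (\<lambda>i j. H (p i) (p j))"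

definition graph_class :: "('l::finite \<Rightarrow> 'l \<Rightarrow> real^'m::finite) \<Rightarrow> ('l \<Rightarrow> 'l \<Rightarrow> real^'m) set" where
  "graph_class G = {sim_perm p G | p. p permutes (UNIV :: 'l set)}"

definition graph_space :: "('l::finite \<Rightarrow> 'l \<Rightarrow> real^'m::finite) set set" where
  "graph_space = {graph_class G | G. True}"

definition gnorm :: "('l::finite \<Rightarrow> 'l \<Rightarrow> real^'m::finite) \<Rightarrow> real" where
  "gnorm G = sqrt (\<Sum>i\<in>UNIV. \<Sum>j\<in>UNIV. (norm (G i j))\<^sup>2)"

definition delta_g_mat :: "('l::finite \<Rightarrow> 'l \<Rightarrow> real^'m::finite) \<Rightarrow> ('l \<Rightarrow> 'l \<Rightarrow> real^'m) \<Rightarrow> real" where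
  "delta_g_mat G H = Min {gnorm (\<lambda>i j. G i j - sim_perm p H i j) | p. p permutes (UNIV :: 'l set)}"

definition delta_g :: "('l::finite \<Rightarrow> 'l \<Rightarrow> real^'m::finite) set \<Rightarrow> ('l \<Rightarrow> 'l \<Rightarrow> real^'m) set \<Rightarrow> real" where
  "delta_g A B = delta_g_mat (SOME G. G \<in> A) (SOME H. H \<in> B)"

end

theory Submission
  imports Defs
begin

text \<open>A partition matrix X becomes the edgeless graph whose node i carries row i of X as its
  attribute. Relabelling the nodes of this graph is the same as permuting the rows of X, so
  graph classes of such graphs correspond to row orbits, and the off-diagonal entries, being
  zero, contribute nothing to the graph edit distance, which therefore equals delta2.\<close>

definition diag_graph :: "('l \<Rightarrow> 'm::finite \<Rightarrow> real) \<Rightarrow> ('l \<Rightarrow> 'l \<Rightarrow> real^'m)" where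
  "diag_graph X = (\<lambda>i j. if i = j then (\<chi> k. X i k) else 0)"

definition perm_dist :: "('l::finite \<Rightarrow> 'm::finite \<Rightarrow> real) \<Rightarrow> ('l \<Rightarrow> 'm \<Rightarrow> real) \<Rightarrow> real" where
  "perm_dist X Y = Min {frob (\<lambda>i j. X i j - row_perm p Y i j) | p. p permutes (UNIV :: 'l set)}"

lemma row_perm_id [simp]: "row_perm id X = X"
  by (simp add: row_perm_def)

lemma row_perm_row_perm: "row_perm p (row_perm q X) = row_perm (q \<circ> p) X"
  by (simp add: row_perm_def)

lemma row_perm_in_row_orbit: "p permutes UNIV \<Longrightarrow> row_perm p X \<in> row_orbit X"
  unfolding row_orbit_def by blast

lemma row_orbit_self: "X \<in> row_orbit X"
  using row_perm_in_row_orbit[OF permutes_id] by simp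

lemma row_orbit_row_perm:
  assumes p: "p permutes UNIV"
  shows "row_orbit (row_perm p X) = row_orbit X"
proof (intro equalityI subsetI)
  fix W assume "W \<in> row_orbit (row_perm p X)"
  then obtain q where q: "q permutes UNIV" "W = row_perm q (row_perm p X)"
    unfolding row_orbit_def by blast
  then show "W \<in> row_orbit X"
    using row_perm_in_row_orbit[OF permutes_compose[OF q(1) p]] by (simp add: row_perm_row_perm)
next
  fix W assume "W \<in> row_orbit X"
  then obtain q where q: "q permutes UNIV" "W = row_perm q X"
    unfolding row_orbit_def by blast
  have "row_perm (inv p \<circ> q) (row_perm p X) = W"
    using q(2) permutes_inverses(1)[OF p] by (simp add: row_perm_row_perm o_def)
  then show "W \<in> row_orbit (row_perm p X)"
    by (metis row_perm_in_row_orbit permutes_compose[OF q(1) permutes_inv[OF p]])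
qed

lemma row_orbit_eq:
  assumes "Y \<in> row_orbit X"
  shows "row_orbit Y = row_orbit X"
proof -
  obtain p where "p permutes UNIV" "Y = row_perm p X"
    using assms unfolding row_orbit_def by blast
  then show ?thesis
    by (simp add: row_orbit_row_perm)
qed

lemma partition_space_nonempty: "A \<in> partition_space \<Longrightarrow> A \<noteq> {}"
  unfolding partition_space_def using row_orbit_self by blast

lemma partition_space_row_orbit: "A \<in> partition_space \<Longrightarrow> X \<in> A \<Longrightarrow> row_orbit X = A"
  unfolding partition_space_def using row_orbit_eq by blast

lemma frob_row_perm:
  assumes "p permutes UNIV"
  shows "frob (row_perm p X) = frob X"
  using sum.permute[OF assms, of "\<lambda>i. \<Sum>j\<in>UNIV. (X i j)\<^sup>2"]
  by (simp add: frob_def row_perm_def o_def)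

lemma delta2_row_orbit: "delta2 (row_orbit X) (row_orbit Y) = perm_dist X Y"
proof -
  have "{frob (\<lambda>i j. X' i j - Y' i j) | X' Y'. X' \<in> row_orbit X \<and> Y' \<in> row_orbit Y}
      = {frob (\<lambda>i j. X i j - row_perm r Y i j) | r. r permutes UNIV}"
  proof (intro equalityI subsetI)
    fix v assume "v \<in> {frob (\<lambda>i j. X' i j - Y' i j) | X' Y'. X' \<in> row_orbit X \<and> Y' \<in> row_orbit Y}"
    then obtain p q where p: "p permutes UNIV" and q: "q permutes UNIV"
      and v: "v = frob (\<lambda>i j. row_perm p X i j - row_perm q Y i j)"
      unfolding row_orbit_def by blast
    \<comment> \<open>the common row permutation p is absorbed by the invariance of the Frobenius norm\<close>
    have "(\<lambda>i j. row_perm p X i j - row_perm q Y i j)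
        = row_perm p (\<lambda>i j. X i j - row_perm (q \<circ> inv p) Y i j)"
      using permutes_inverses(2)[OF p] by (simp add: row_perm_def fun_eq_iff)
    then have "v = frob (\<lambda>i j. X i j - row_perm (q \<circ> inv p) Y i j)"
      using v frob_row_perm[OF p] by simp
    moreover have "q \<circ> inv p permutes UNIV"
      using permutes_compose[OF permutes_inv[OF p] q] .
    ultimately show "v \<in> {frob (\<lambda>i j. X i j - row_perm r Y i j) | r. r permutes UNIV}"
      by blast
  next
    fix v assume "v \<in> {frob (\<lambda>i j. X i j - row_perm r Y i j) | r. r permutes UNIV}"
    then show "v \<in> {frob (\<lambda>i j. X' i j - Y' i j) | X' Y'. X' \<in> row_orbit X \<and> Y' \<in> row_orbit Y}"
      using row_orbit_self row_perm_in_row_orbit by blast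
  qed
  then show ?thesis
    unfolding delta2_def perm_dist_def by simp
qed

lemma inj_diag_graph: "inj diag_graph"
proof (rule injI)
  fix X Y :: "'l \<Rightarrow> 'm::finite \<Rightarrow> real"
  assume "diag_graph X = diag_graph Y"
  then have "(\<chi> k. X i k) = (\<chi> k. Y i k)" for i
    by (metis diag_graph_def)
  then show "X = Y"
    by (simp add: fun_eq_iff vec_eq_iff)
qed

lemma sim_perm_diag_graph:
  assumes "inj p"
  shows "sim_perm p (diag_graph X) = diag_graph (row_perm p X)"
  using assms by (auto simp: sim_perm_def diag_graph_def row_perm_def fun_eq_iff inj_eq)

lemma graph_class_diag_graph:
  "graph_class (diag_graph X) = diag_graph ` row_orbit (X :: 'l::finite \<Rightarrow> 'm::finite \<Rightarrow> real)"
  unfolding graph_class_def row_orbit_def setcompr_eq_image image_image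
  by (intro image_cong refl) (simp add: sim_perm_diag_graph permutes_inj)

lemma gnorm_diag_graph_diff:
  "gnorm (\<lambda>i j. diag_graph X i j - diag_graph Y i j) = frob (\<lambda>i j. X i j - Y i j)"
proof -
  have "(norm (diag_graph X i j - diag_graph Y i j))\<^sup>2
      = (if i = j then (norm ((\<chi> k. X i k) - (\<chi> k. Y i k)))\<^sup>2 else 0)" for i j
    by (simp add: diag_graph_def)
  then have "(\<Sum>j\<in>UNIV. (norm (diag_graph X i j - diag_graph Y i j))\<^sup>2)
      = (norm ((\<chi> k. X i k) - (\<chi> k. Y i k)))\<^sup>2" for i
    by simp
  also have "(norm ((\<chi> k. X i k) - (\<chi> k. Y i k)))\<^sup>2 = (\<Sum>j\<in>UNIV. (X i j - Y i j)\<^sup>2)" for i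
    by (simp add: norm_vec_def L2_set_def sum_nonneg)
  finally show ?thesis
    by (simp add: gnorm_def frob_def)
qed

lemma delta_g_mat_diag_graph: "delta_g_mat (diag_graph X) (diag_graph Y) = perm_dist X Y"
  unfolding delta_g_mat_def perm_dist_def setcompr_eq_image
  by (intro arg_cong[where f = Min] image_cong refl)
    (simp add: sim_perm_diag_graph permutes_inj gnorm_diag_graph_diff)

lemma some_diag_graph_image:
  assumes "A \<noteq> {}"
  obtains X where "X \<in> A" and "(SOME G. G \<in> diag_graph ` A) = diag_graph X"
  using someI_ex[of "\<lambda>G. G \<in> diag_graph ` A"] assms by blast

theorem theorem5:
  assumes "CARD('l::finite) \<le> CARD('m::finite)"
  shows "\<exists>f :: ('l \<Rightarrow> 'm \<Rightarrow> real) set \<Rightarrow> ('l \<Rightarrow> 'l \<Rightarrow> real^'m) set.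
           f ` partition_space \<subseteq> graph_space \<and>
           inj_on f partition_space \<and>
           (\<forall>X\<in>partition_space. \<forall>Y\<in>partition_space. delta_g (f X) (f Y) = delta2 X Y)"
proof (intro exI conjI ballI)
  show "(image diag_graph) ` partition_space \<subseteq> graph_space"
    unfolding partition_space_def graph_space_def by (auto simp: graph_class_diag_graph[symmetric])
  show "inj_on (image diag_graph) partition_space"
    by (rule inj_onI) (simp add: inj_image_eq_iff[OF inj_diag_graph])
next
  fix A B :: "('l \<Rightarrow> 'm \<Rightarrow> real) set"
  assume A: "A \<in> partition_space" and B: "B \<in> partition_space"
  obtain X where X: "X \<in> A" "(SOME G. G \<in> diag_graph ` A) = diag_graph X"
    using some_diag_graph_image partition_space_nonempty[OF A] by metis
  obtain Y where Y: "Y \<in> B" "(SOME G. G \<in> diag_graph ` B) = diag_graph Y"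
    using some_diag_graph_image partition_space_nonempty[OF B] by metis
  have "delta_g (diag_graph ` A) (diag_graph ` B) = perm_dist X Y"
    by (simp add: delta_g_def X(2) Y(2) delta_g_mat_diag_graph)
  also have "\<dots> = delta2 A B"
    using partition_space_row_orbit[OF A X(1)] partition_space_row_orbit[OF B Y(1)]
    by (metis delta2_row_orbit)
  finally show "delta_g (diag_graph ` A) (diag_graph ` B) = delta2 A B" .
qed

end
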